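(* Let $n\ge 4$ be an integer, and let $I$ be chosen uniformly at random among the $2$-element subsets of $\{1,\ldots,n\}$. Then the probability that the sequence $(C_0(I),\ldots,C_{s(I)}(I))$ of Naruse-Newton coefficients of $I$ is unimodal is exactly $\frac{4}{n}$.
   Context: Partitions are drawn as Young diagrams $\mathbb{D}(\lambda)$ in English notation; $c_{i,j}$ is the cell in row $i$, column $j$. The hook length $h_\lambda(c)$ is the number of cells of $\mathbb{D}(\lambda)$ weakly right of $c$ in its row or weakly below $c$ in its column (counting $c$ once). For $\mu\subseteq\lambda$, an excited diagram of $\lambda/\mu$ is a subset of $\mathbb{D}(\lambda)$ obtained from $\mathbb{D}(\mu)$ by repeatedly replacing a cell $c_{i,j}\in D$ by $c_{i+1,j+1}$, allowed iff $c_{i+1,j+1}\in\mathbb{D}(\lambda)$ and none of $c_{i,j+1},c_{i+1,j},c_{i+1,j+1}$ lies in $D$; $\mathbb{E}(\lambda/\mu)$ is their set. A ribbon with $n$ cells is read from its lower-left to its upper-right cell, each successive cell directly right of or directly above the previous; it corresponds to the set of $i\in\{1,\ldots,n-1\}$ with cell $i$ directly below cell $i+1$. A descent set is a non-empty finite set $I$ of positive integers; $\lambda^I$ is the unique partition with $\lambda^I_1=\lambda^I_2$ such that the cells $c_{i,j}\in\mathbb{D}(\lambda^I)$ with fewer than three of $c_{i,j+1},c_{i+1,j},c_{i+1,j+1}$ in $\mathbb{D}(\lambda^I)$ form a ribbon corresponding to $I$; this ribbon is $\mathbb{D}(\lambda^I)\setminus\mathbb{D}(\mu^I)$ for a partition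 $\mu^I$. Let $s(I)=\lambda^I_1-1$. Naruse-Newton coefficients: every excited diagram of $\lambda^I/\mu^I$ meets row 1 in $\{c_{1,1},\ldots,c_{1,r}\}$, $0\le r\le s$; for $0\le j\le s(I)$, $C_j(I)=\sum_D\prod_{c\in D,\,c\notin\text{row }1}h_{\lambda^I}(c)$, summed over $D\in\mathbb{E}(\lambda^I/\mu^I)$ with exactly $s-j$ cells in row 1. A sequence $(x_k)_{k=0}^m$ is unimodal if there is an index $i$ with $0\le i\le m$ such that $x_0\le x_1\le\cdots\le x_i$ and $x_i\ge x_{i+1}\ge\cdots\ge x_m$. *)

theory Defs
  imports Complex_Main
begin

text \<open>Cells are pairs (row, column), both indexed from 1 (English notation).
  A partition is a list of positive, weakly decreasing parts.\<close>

type_synonym cell = "nat \<times> nat"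

definition is_partition :: "nat list \<Rightarrow> bool" where
  "is_partition lam \<longleftrightarrow> sorted_wrt (\<ge>) lam \<and> (\<forall>x \<in> set lam. 0 < x)"

definition diagram :: "nat list \<Rightarrow> cell set" where
  "diagram lam = {(i, j). 1 \<le> i \<and> i \<le> length lam \<and> 1 \<le> j \<and> j \<le> lam ! (i - 1)}"

definition hook :: "nat list \<Rightarrow> cell \<Rightarrow> nat" where
  "hook lam c = card {d \<in> diagram lam. fst d = fst c \<and> snd d \<ge> snd c}
              + card {d \<in> diagram lam. snd d = snd c \<and> fst d \<ge> fst c} - 1"

definition rim :: "nat list \<Rightarrow> cell set" where
  "rim lam = {(i, j) \<in> diagram lam.
      card ({(i, j + 1), (i + 1, j), (i + 1, j + 1)} \<inter> diagram lam) < 3}"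

text \<open>A set S of cells is a ribbon corresponding to the descent set I:
  it has m = Max I + 1 cells read from lower-left to upper-right, cell k+1 is directly
  above cell k iff k \<in> I and directly right of it otherwise.  Cell k (1 \<le> k \<le> m)
  sits (number of up-steps still to come) rows below the top row a and
  (k - 1 - number of up-steps already made) columns right of the start column b.\<close>
definition ribbon_of :: "nat set \<Rightarrow> cell set \<Rightarrow> bool" where
  "ribbon_of I S \<longleftrightarrow> (\<exists>m a b. I \<subseteq> {1..<m} \<and>
     S = (\<lambda>k. (a + card {i \<in> I. k \<le> i}, b + (k - 1) - card {i \<in> I. i < k})) ` {1..m})"

definition descent_set :: "nat set \<Rightarrow> bool" where
  "descent_set I \<longleftrightarrow> finite I \<and> I \<noteq> {} \<and> 0 \<notin> I"

definition lamI :: "nat set \<Rightarrow> nat list" where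
  "lamI I = (THE lam. is_partition lam \<and> 2 \<le> length lam \<and> lam ! 0 = lam ! 1
                      \<and> ribbon_of I (rim lam))"

definition muI :: "nat set \<Rightarrow> nat list" where
  "muI I = (THE mu. is_partition mu \<and> diagram mu \<subseteq> diagram (lamI I)
                    \<and> diagram (lamI I) - diagram mu = rim (lamI I))"

definition sI :: "nat set \<Rightarrow> nat" where
  "sI I = lamI I ! 0 - 1"

inductive excited :: "nat list \<Rightarrow> nat list \<Rightarrow> cell set \<Rightarrow> bool" for lam mu where
  base: "excited lam mu (diagram mu)"
| move: "\<lbrakk> excited lam mu D; (i, j) \<in> D; (i + 1, j + 1) \<in> diagram lam;
           (i, j + 1) \<notin> D; (i + 1, j) \<notin> D; (i + 1, j + 1) \<notin> D \<rbrakk>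
         \<Longrightarrow> excited lam mu (insert (i + 1, j + 1) (D - {(i, j)}))"

definition NN_coeff :: "nat set \<Rightarrow> nat \<Rightarrow> nat" where
  "NN_coeff I j = (\<Sum>D \<in> {D. excited (lamI I) (muI I) D
                             \<and> card {c \<in> D. fst c = 1} = sI I - j}.
                    \<Prod>c \<in> {c \<in> D. fst c \<noteq> 1}. hook (lamI I) c)"

definition unimodal :: "(nat \<Rightarrow> nat) \<Rightarrow> nat \<Rightarrow> bool" where
  "unimodal x m \<longleftrightarrow> (\<exists>i \<le> m. (\<forall>a b. a \<le> b \<and> b \<le> i \<longrightarrow> x a \<le> x b)
                          \<and> (\<forall>a b. i \<le> a \<and> a \<le> b \<and> b \<le> m \<longrightarrow> x b \<le> x a))"

end

theory Submission
  imports Defs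
begin

text \<open>For \<open>I = {a, b}\<close> with \<open>a < b\<close> the shapes are \<open>\<lambda>\<^sup>I = (L, L, a)\<close> and
  \<open>\<mu>\<^sup>I = (L - 1, a - 1)\<close> with \<open>L = b - 1\<close>. An excited diagram of \<open>\<lambda>\<^sup>I / \<mu>\<^sup>I\<close> is
  determined by the number \<open>r\<close> of cells left in row 1 and the number \<open>q \<le> min r (a - 1)\<close> of
  cells left at the start of row 2, and its hook weight factors as \<open>R(r) V(q)\<close>, where \<open>R(r)\<close>
  collects the hooks of row 2 right of column \<open>r + 1\<close>. Hence \<open>C\<^sub>j = R(r) \<Sigma>\<^sub>q V(q)\<close>
  for \<open>j = s - r\<close>.
  For \<open>r \<ge> a - 1\<close> the sum is constant and \<open>R\<close> decreases, while for \<open>r < a - 1\<close> the sum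
  grows faster than \<open>R\<close> shrinks. So the sequence read from \<open>r = 0\<close> rises up to \<open>r = a - 1\<close>
  and then falls, except that for \<open>a \<ge> 3\<close> it first drops from \<open>r = 0\<close> to \<open>r = 1\<close>,
  unless \<open>a = 3, b = 4\<close> where these two terms agree. The unimodal pairs are thus
  \<open>a \<le> 2\<close> and \<open>{3, 4}\<close>, that is \<open>2 (n - 1)\<close> of the \<open>n (n - 1) / 2\<close> pairs.\<close>

lemma unimodal_intro:
  assumes "i \<le> m"
    and up: "\<And>k. k < i \<Longrightarrow> x k \<le> x (Suc k)"
    and down: "\<And>k. i \<le> k \<Longrightarrow> k < m \<Longrightarrow> x (Suc k) \<le> x k"
  shows "unimodal x m"
  unfolding unimodal_def
proof (intro exI[of _ i] conjI allI impI)
  fix a b assume "a \<le> b \<and> b \<le> i"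
  then have "a \<le> b" "b \<le> i" by auto
  then show "x a \<le> x b"
  proof (induction b rule: dec_induct)
    case (step n)
    then show ?case using up[of n] by simp
  qed simp
next
  fix a b assume "i \<le> a \<and> a \<le> b \<and> b \<le> m"
  then have "a \<le> b" "i \<le> a" "b \<le> m" by auto
  then show "x b \<le> x a"
  proof (induction b rule: dec_induct)
    case (step n)
    then show ?case using down[of n] by simp
  qed simp
qed fact

lemma not_unimodal_descent_ascent:
  assumes "x (Suc p) < x p" "x q < x (Suc q)" "p < q" "Suc q \<le> m"
  shows "\<not> unimodal x m"
proof
  assume "unimodal x m"
  then obtain i where up: "\<forall>a b. a \<le> b \<and> b \<le> i \<longrightarrow> x a \<le> x b"
    and down: "\<forall>a b. i \<le> a \<and> a \<le> b \<and> b \<le> m \<longrightarrow> x b \<le> x a"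
    unfolding unimodal_def by blast
  show False
  proof (cases "p < i")
    case True
    then show False using up[rule_format, of p "Suc p"] assms(1) by simp
  next
    case False
    then show False using down[rule_format, of q "Suc q"] assms(2-4) by simp
  qed
qed

lemma unimodal_cong:
  assumes "\<And>j. j \<le> m \<Longrightarrow> x j = y j"
  shows "unimodal x m \<longleftrightarrow> unimodal y m"
proof -
  have "(i \<le> m \<and> (\<forall>a b. a \<le> b \<and> b \<le> i \<longrightarrow> x a \<le> x b)
        \<and> (\<forall>a b. i \<le> a \<and> a \<le> b \<and> b \<le> m \<longrightarrow> x b \<le> x a))
    \<longleftrightarrow> (i \<le> m \<and> (\<forall>a b. a \<le> b \<and> b \<le> i \<longrightarrow> y a \<le> y b)
        \<and> (\<forall>a b. i \<le> a \<and> a \<le> b \<and> b \<le> m \<longrightarrow> y b \<le> y a))"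
    for i
    by (auto simp: assms)
  then show ?thesis unfolding unimodal_def by simp
qed

lemma unimodal_reflect:
  assumes "unimodal x m"
  shows "unimodal (\<lambda>j. x (m - j)) m"
proof -
  obtain i where "i \<le> m" and up: "\<forall>a b. a \<le> b \<and> b \<le> i \<longrightarrow> x a \<le> x b"
    and down: "\<forall>a b. i \<le> a \<and> a \<le> b \<and> b \<le> m \<longrightarrow> x b \<le> x a"
    using assms unfolding unimodal_def by blast
  show ?thesis
    unfolding unimodal_def
  proof (intro exI[of _ "m - i"] conjI allI impI)
    fix a b assume "a \<le> b \<and> b \<le> m - i"
    then have "i \<le> m - b" "m - b \<le> m - a" using \<open>i \<le> m\<close> by auto
    then show "x (m - a) \<le> x (m - b)" using down by simp
  next
    fix a b assume "m - i \<le> a \<and> a \<le> b \<and> b \<le> m"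
    then have "m - b \<le> m - a" "m - a \<le> i" using \<open>i \<le> m\<close> by auto
    then show "x (m - b) \<le> x (m - a)" using up by simp
  qed simp
qed

lemma unimodal_reflect_iff: "unimodal (\<lambda>j. x (m - j)) m \<longleftrightarrow> unimodal x m"
proof -
  have "unimodal (\<lambda>j. x (m - (m - j))) m \<longleftrightarrow> unimodal x m"
    by (rule unimodal_cong) simp
  then show ?thesis using unimodal_reflect[of x m] unimodal_reflect[of "\<lambda>j. x (m - j)" m] by blast
qed

lemma mem_diagram:
  "(i, j) \<in> diagram lam \<longleftrightarrow> 1 \<le> i \<and> i \<le> length lam \<and> 1 \<le> j \<and> j \<le> lam ! (i - 1)"
  by (simp add: diagram_def)

lemma is_partition_nth_antimono:
  "is_partition lam \<Longrightarrow> i \<le> k \<Longrightarrow> k < length lam \<Longrightarrow> lam ! k \<le> lam ! i"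
  unfolding is_partition_def by (metis sorted_wrt_iff_nth_less order_le_less)

lemma is_partition_nth_pos: "is_partition lam \<Longrightarrow> k < length lam \<Longrightarrow> 0 < lam ! k"
  unfolding is_partition_def by auto

lemma mem_diagram_three_rows:
  "(i, j) \<in> diagram [L, L, a] \<longleftrightarrow> 1 \<le> j \<and> ((i = 1 \<or> i = 2) \<and> j \<le> L \<or> i = 3 \<and> j \<le> a)"
proof -
  have "i \<in> {1..3} \<longleftrightarrow> i = 1 \<or> i = 2 \<or> i = 3" by auto
  then show ?thesis by (auto simp: mem_diagram)
qed

lemma mem_diagram_two_rows:
  "(i, j) \<in> diagram [x, y] \<longleftrightarrow> 1 \<le> j \<and> (i = 1 \<and> j \<le> x \<or> i = 2 \<and> j \<le> y)"
proof -
  have "i \<in> {1..2} \<longleftrightarrow> i = 1 \<or> i = 2" by auto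
  then show ?thesis by (auto simp: mem_diagram)
qed

lemma ex_partition_diagram_two_rows:
  assumes "y \<le> x"
  shows "\<exists>w. is_partition w \<and> diagram w = diagram [x, y]"
proof (intro exI conjI)
  show "is_partition (filter (\<lambda>z. 0 < z) [x, y])"
    using assms by (auto simp: is_partition_def)
  have "(i, j) \<in> diagram (filter (\<lambda>z. 0 < z) [x, y]) \<longleftrightarrow> (i, j) \<in> diagram [x, y]" for i j
    unfolding mem_diagram_two_rows using assms
    by (cases "x = 0"; cases "y = 0") (auto simp: mem_diagram le_Suc_eq)
  then show "diagram (filter (\<lambda>z. 0 < z) [x, y]) = diagram [x, y]" by auto
qed

lemma is_partition_three_rows: "1 \<le> a \<Longrightarrow> a \<le> L \<Longrightarrow> is_partition [L, L, a]"
  by (simp add: is_partition_def)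

lemma rim_subset_diagram: "rim lam \<subseteq> diagram lam"
  by (auto simp: rim_def)

lemma rim_partition:
  assumes lam: "is_partition lam"
  shows "rim lam = {(i, j) \<in> diagram lam. (i + 1, j + 1) \<notin> diagram lam}"
proof -
  have "card ({(i, j + 1), (i + 1, j), (i + 1, j + 1)} \<inter> diagram lam) < 3
          \<longleftrightarrow> (i + 1, j + 1) \<notin> diagram lam" if "(i, j) \<in> diagram lam" for i j
  proof -
    have "(i + 1, j + 1) \<in> diagram lam \<Longrightarrow> (i, j + 1) \<in> diagram lam \<and> (i + 1, j) \<in> diagram lam"
      using that is_partition_nth_antimono[OF lam, of "i - 1" i] by (auto simp: mem_diagram)
    then show ?thesis
      by (cases "(i, j + 1) \<in> diagram lam"; cases "(i + 1, j) \<in> diagram lam";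
          cases "(i + 1, j + 1) \<in> diagram lam") (auto simp: Int_insert_left card_insert_if)
  qed
  then show ?thesis unfolding rim_def by auto
qed

lemma row_end_in_rim:
  assumes lam: "is_partition lam" and "1 \<le> i" "i \<le> length lam"
  shows "(i, lam ! (i - 1)) \<in> rim lam"
  using assms is_partition_nth_pos[OF lam, of "i - 1"] is_partition_nth_antimono[OF lam, of "i - 1" i]
  unfolding rim_partition[OF lam] by (auto simp: mem_diagram Suc_le_eq)

lemma column_end_in_rim:
  assumes lam: "is_partition lam" "lam \<noteq> []"
  shows "(length lam, 1) \<in> rim lam"
  using assms is_partition_nth_pos[OF lam(1), of "length lam - 1"]
  unfolding rim_partition[OF lam(1)] by (auto simp: mem_diagram Suc_le_eq)

text \<open>Row \<open>i\<close> of the rim ends in the last cell of row \<open>i\<close>, so the rim determines the partition.\<close>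
lemma partition_eq_if_rim_eq:
  assumes p: "is_partition p" and q: "is_partition q" and pq: "rim p = rim q"
  shows "p = q"
proof -
  have row_in_rim: "(\<exists>j. (i, j) \<in> rim lam) \<longleftrightarrow> 1 \<le> i \<and> i \<le> length lam" if "is_partition lam" for lam i
    using row_end_in_rim[OF that, of i] rim_subset_diagram[of lam] by (auto simp: mem_diagram)
  have row_end: "lam ! (i - 1) = Max {j. (i, j) \<in> rim lam}"
    if "is_partition lam" "1 \<le> i" "i \<le> length lam" for lam i
  proof (rule sym, rule Max_eqI)
    show "finite {j. (i, j) \<in> rim lam}"
      by (rule finite_subset[of _ "{..lam ! (i - 1)}"])
         (use rim_subset_diagram[of lam] in \<open>auto simp: mem_diagram\<close>)
  qed (use row_end_in_rim[OF that] rim_subset_diagram[of lam] in \<open>auto simp: mem_diagram\<close>)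
  have len: "length p = length q"
    using row_in_rim[OF p, of "length p"] row_in_rim[OF q, of "length p"]
      row_in_rim[OF p, of "length q"] row_in_rim[OF q, of "length q"] pq
    by (cases "p = []"; cases "q = []") (auto simp: Suc_le_eq)
  show ?thesis
  proof (rule nth_equalityI[OF len])
    fix k assume "k < length p"
    then show "p ! k = q ! k"
      using row_end[OF p, of "Suc k"] row_end[OF q, of "Suc k"] len pq by simp
  qed
qed

lemma partition_eq_if_diagram_eq:
  "is_partition p \<Longrightarrow> is_partition q \<Longrightarrow> diagram p = diagram q \<Longrightarrow> p = q"
  by (rule partition_eq_if_rim_eq) (simp_all add: rim_def)

section \<open>The shapes attached to a two-element descent set\<close>

definition ribbon_cell :: "nat set \<Rightarrow> nat \<Rightarrow> nat \<Rightarrow> nat \<Rightarrow> cell" where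
  "ribbon_cell I a b k = (a + card {i \<in> I. k \<le> i}, b + (k - 1) - card {i \<in> I. i < k})"

lemma ribbon_of_iff: "ribbon_of I S \<longleftrightarrow> (\<exists>m a b. I \<subseteq> {1..<m} \<and> S = ribbon_cell I a b ` {1..m})"
  by (simp add: ribbon_of_def ribbon_cell_def)

lemma card_filter_doubleton:
  "a \<noteq> b \<Longrightarrow> card {i \<in> {a, b}. P i} = (if P a then 1 else 0) + (if P b then 1 else 0)"
proof -
  assume "a \<noteq> b"
  moreover have "{i \<in> {a, b}. P i} = (if P a then {a} else {}) \<union> (if P b then {b} else {})"
    by auto
  ultimately show ?thesis by simp
qed

lemma ribbon_cell_doubleton:
  assumes "a \<noteq> b"
  shows "ribbon_cell {a, b} a0 b0 k =
    (a0 + ((if k \<le> a then 1 else 0) + (if k \<le> b then 1 else 0)),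
     b0 + (k - 1) - ((if a < k then 1 else 0) + (if b < k then 1 else 0)))"
  by (simp only: ribbon_cell_def card_filter_doubleton[OF assms])

definition ribbon2 :: "nat \<Rightarrow> nat \<Rightarrow> cell set" where
  "ribbon2 a b = {(i, j). (i = 3 \<and> 1 \<le> j \<and> j \<le> a) \<or> (i = 2 \<and> a \<le> j \<and> j \<le> b - 1)
                          \<or> (i = 1 \<and> j = b - 1)}"

lemma ribbon2_eq_image:
  assumes ab: "1 \<le> a" "a < b"
  shows "ribbon_cell {a, b} 1 1 ` {1..b + 1} = ribbon2 a b" (is "?f ` _ = _")
proof
  show "?f ` {1..b + 1} \<subseteq> ribbon2 a b"
  proof
    fix c assume "c \<in> ?f ` {1..b + 1}"
    then obtain k where k: "k \<in> {1..b + 1}" "c = ?f k" by blast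
    consider "k \<le> a" | "a < k" "k \<le> b" | "k = b + 1" using k by fastforce
    then show "c \<in> ribbon2 a b"
      by cases (use k ab in \<open>auto simp: ribbon_cell_doubleton ribbon2_def\<close>)
  qed
  show "ribbon2 a b \<subseteq> ?f ` {1..b + 1}"
  proof
    fix c assume c: "c \<in> ribbon2 a b"
    obtain i j where ij: "c = (i, j)" by fastforce
    consider "i = 3" "1 \<le> j" "j \<le> a" | "i = 2" "a \<le> j" "j \<le> b - 1" | "i = 1" "j = b - 1"
      using c ij by (auto simp: ribbon2_def)
    then show "c \<in> ?f ` {1..b + 1}"
    proof cases
      case 1 then show ?thesis using ab ij by (intro image_eqI[of _ _ j]) (auto simp: ribbon_cell_doubleton)
    next
      case 2 then show ?thesis using ab ij by (intro image_eqI[of _ _ "j + 1"]) (auto simp: ribbon_cell_doubleton)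
    next
      case 3 then show ?thesis using ab ij by (intro image_eqI[of _ _ "b + 1"]) (auto simp: ribbon_cell_doubleton)
    qed
  qed
qed

lemma rim_three_rows:
  assumes "1 \<le> a" "a < b"
  shows "rim [b - 1, b - 1, a] = ribbon2 a b"
proof -
  have lam: "is_partition [b - 1, b - 1, a]" by (rule is_partition_three_rows) (use assms in auto)
  show ?thesis
    using assms unfolding rim_partition[OF lam] by (auto simp: mem_diagram_three_rows ribbon2_def)
qed

text \<open>Both offsets of the ribbon are 1 because the rim reaches row 1 and column 1, and the
  ribbon has exactly \<open>b + 1\<close> cells because \<open>\<lambda>\<^sub>1 = \<lambda>\<^sub>2\<close> leaves a single rim cell in row 1.\<close>
lemma rim_eq_ribbon2:
  assumes ab: "1 \<le> a" "a < b"
    and lam: "is_partition lam" "2 \<le> length lam" "lam ! 0 = lam ! 1"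
    and ribbon: "ribbon_of {a, b} (rim lam)"
  shows "rim lam = ribbon2 a b"
proof -
  obtain m a0 b0 where "{a, b} \<subseteq> {1..<m}" and R: "rim lam = ribbon_cell {a, b} a0 b0 ` {1..m}"
    using ribbon unfolding ribbon_of_iff by blast
  then have bm: "b < m" by auto
  let ?g = "ribbon_cell {a, b} a0 b0"
  have g: "?g k = (a0 + ((if k \<le> a then 1 else 0) + (if k \<le> b then 1 else 0)),
      b0 + (k - 1) - ((if a < k then 1 else 0) + (if b < k then 1 else 0)))" for k
    using ab by (simp add: ribbon_cell_doubleton)
  have in_diagram: "k \<in> {1..m} \<Longrightarrow> ?g k \<in> diagram lam" for k
    using R rim_subset_diagram by blast
  have a0: "a0 = 1"
  proof -
    obtain k where "?g k = (1, lam ! 0)"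
      using row_end_in_rim[OF lam(1), of 1] lam(2) R by auto
    moreover have "?g m \<in> diagram lam" using in_diagram bm by simp
    ultimately show ?thesis using bm ab by (simp add: g mem_diagram)
  qed
  have b0: "b0 = 1"
  proof -
    have col_ge: "b0 \<le> snd (?g k)" if "1 \<le> k" for k
      using ab that by (cases "k \<le> a"; cases "k \<le> b") (simp_all add: g)
    have "lam \<noteq> []" using lam(2) by auto
    then obtain k where "k \<in> {1..m}" "?g k = (length lam, 1)"
      using column_end_in_rim[OF lam(1)] R by (metis imageE)
    then have "b0 \<le> 1" using col_ge[of k] by simp
    moreover have "?g 1 \<in> diagram lam" using in_diagram bm by simp
    ultimately show ?thesis using ab by (simp add: g mem_diagram)
  qed
  have "(1, b - 1) \<in> ?g ` {1..m}"
    by (rule image_eqI[of _ _ "b + 1"]) (use ab bm in \<open>simp_all add: g, simp add: a0 b0\<close>)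
  then have "lam ! 1 \<le> b - 1"
    unfolding R[symmetric] rim_partition[OF lam(1)] using lam(2) by (auto simp: mem_diagram numeral_2_eq_2)
  moreover have "m - 2 \<le> lam ! 0"
    using in_diagram[of m] bm ab unfolding g by (simp add: a0 b0 mem_diagram numeral_2_eq_2)
  ultimately have "m = b + 1" using ab bm unfolding lam(3) by linarith
  then show ?thesis using R ribbon2_eq_image[OF ab] by (simp add: a0 b0)
qed

lemma lamI_doubleton:
  assumes ab: "1 \<le> a" "a < b"
  shows "lamI {a, b} = [b - 1, b - 1, a]"
  unfolding lamI_def
proof (rule the_equality)
  have "ribbon_of {a, b} (rim [b - 1, b - 1, a])"
    unfolding ribbon_of_iff rim_three_rows[OF ab] ribbon2_eq_image[OF ab, symmetric]
    using ab by (intro exI[of _ "b + 1"] exI[of _ 1]) auto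
  then show "is_partition [b - 1, b - 1, a] \<and> 2 \<le> length [b - 1, b - 1, a]
      \<and> [b - 1, b - 1, a] ! 0 = [b - 1, b - 1, a] ! 1 \<and> ribbon_of {a, b} (rim [b - 1, b - 1, a])"
    using ab is_partition_three_rows[of a "b - 1"] by simp
next
  fix lam
  assume "is_partition lam \<and> 2 \<le> length lam \<and> lam ! 0 = lam ! 1 \<and> ribbon_of {a, b} (rim lam)"
  then have "is_partition lam" "rim lam = rim [b - 1, b - 1, a]"
    using rim_eq_ribbon2[OF ab] rim_three_rows[OF ab] by auto
  then show "lam = [b - 1, b - 1, a]"
    using partition_eq_if_rim_eq is_partition_three_rows[of a "b - 1"] ab by simp
qed

lemma diagram_muI_doubleton:
  assumes ab: "1 \<le> a" "a < b"
  shows "diagram (muI {a, b}) = diagram [b - 2, a - 1]"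
proof -
  let ?lam = "[b - 1, b - 1, a]"
  obtain w where w: "is_partition w" "diagram w = diagram [b - 2, a - 1]"
    using ex_partition_diagram_two_rows[of "a - 1" "b - 2"] ab by force
  have inner: "diagram ?lam - rim ?lam = diagram [b - 2, a - 1]"
    using ab unfolding rim_three_rows[OF ab]
    by (auto simp: set_eq_iff mem_diagram_three_rows mem_diagram_two_rows ribbon2_def)
  have "muI {a, b} = w"
    unfolding muI_def lamI_doubleton[OF ab]
  proof (rule the_equality)
    show "is_partition w \<and> diagram w \<subseteq> diagram ?lam \<and> diagram ?lam - diagram w = rim ?lam"
      using w inner rim_subset_diagram[of ?lam] by blast
  next
    fix mu
    assume "is_partition mu \<and> diagram mu \<subseteq> diagram ?lam \<and> diagram ?lam - diagram mu = rim ?lam"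
    then have "is_partition mu" "diagram mu = diagram w" using inner w by auto
    then show "mu = w" using partition_eq_if_diagram_eq w(1) by blast
  qed
  then show ?thesis using w by simp
qed

lemma sI_doubleton: "1 \<le> a \<Longrightarrow> a < b \<Longrightarrow> sI {a, b} = b - 2"
  by (simp add: sI_def lamI_doubleton)

section \<open>Excited diagrams\<close>

text \<open>The excited diagram of \<open>[L, L, a] / [L - 1, a - 1]\<close> in which the cells of row 1 beyond
  column \<open>r\<close> have slid down to row 2 and the cells of row 2 beyond column \<open>q\<close> to row 3.\<close>
definition excited_cells :: "nat \<Rightarrow> nat \<Rightarrow> nat \<Rightarrow> nat \<Rightarrow> cell set" where
  "excited_cells L a r q = {(i, j). i = 1 \<and> 1 \<le> j \<and> j \<le> r
      \<or> i = 2 \<and> (1 \<le> j \<and> j \<le> q \<or> r + 2 \<le> j \<and> j \<le> L) \<or> i = 3 \<and> q + 2 \<le> j \<and> j \<le> a}"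

lemma mem_excited_cells:
  "(i, j) \<in> excited_cells L a r q \<longleftrightarrow> i = 1 \<and> 1 \<le> j \<and> j \<le> r
      \<or> i = 2 \<and> (1 \<le> j \<and> j \<le> q \<or> r + 2 \<le> j \<and> j \<le> L) \<or> i = 3 \<and> q + 2 \<le> j \<and> j \<le> a"
  by (simp add: excited_cells_def)

lemma excited_cells_initial:
  "1 \<le> a \<Longrightarrow> a \<le> L \<Longrightarrow> excited_cells L a (L - 1) (a - 1) = diagram [L - 1, a - 1]"
  by (auto simp: set_eq_iff mem_excited_cells mem_diagram_two_rows)

lemma excited_cells_slide_row1:
  "q \<le> r \<Longrightarrow> r + 2 \<le> L \<Longrightarrow>
    insert (2, r + 2) (excited_cells L a (r + 1) q - {(1, r + 1)}) = excited_cells L a r q"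
  by (auto simp: set_eq_iff mem_excited_cells)

lemma excited_cells_slide_row2:
  "q < r \<Longrightarrow> q + 2 \<le> a \<Longrightarrow>
    insert (3, q + 2) (excited_cells L a r (q + 1) - {(2, q + 1)}) = excited_cells L a r q"
  by (auto simp: set_eq_iff mem_excited_cells)

lemma excited_imp_excited_cells:
  assumes "excited [L, L, a] mu D" "diagram mu = diagram [L - 1, a - 1]" "1 \<le> a" "a \<le> L"
  shows "\<exists>r q. r \<le> L - 1 \<and> q \<le> r \<and> q \<le> a - 1 \<and> D = excited_cells L a r q"
  using assms(1)
proof induction
  case base
  have "diagram mu = excited_cells L a (L - 1) (a - 1)"
    using assms(2-4) excited_cells_initial[of a L] by simp
  then show ?case using assms(4) by (intro exI[of _ "L - 1"] exI[of _ "a - 1"]) simp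
next
  case (move D i j)
  from move.IH obtain r q where rq: "r \<le> L - 1" "q \<le> r" "q \<le> a - 1" and D: "D = excited_cells L a r q"
    by blast
  have inside: "(i + 1, j + 1) \<in> diagram [L, L, a]" by fact
  have free: "(i, j + 1) \<notin> D" "(i + 1, j) \<notin> D" by fact+
  consider "i = 1" "1 \<le> j" "j \<le> r" | "i = 2" "1 \<le> j" "j \<le> q" | "i = 2" "r + 2 \<le> j" | "i = 3"
    using \<open>(i, j) \<in> D\<close> D by (auto simp: mem_excited_cells)
  then show ?case
  proof cases
    case 1
    then have "j = r" "q < r" "r + 1 \<le> L"
      using free inside D by (auto simp: mem_excited_cells mem_diagram_three_rows)
    moreover obtain r' where r': "r = r' + 1" using 1 by (cases r) auto
    ultimately have "insert (i + 1, j + 1) (D - {(i, j)}) = excited_cells L a r' q" "q \<le> r'"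
      using excited_cells_slide_row1[of q r' L a] D 1 by (simp_all add: numeral_2_eq_2)
    then show ?thesis using rq r' by (intro exI[of _ r'] exI[of _ q]) simp
  next
    case 2
    then have "j = q" "q + 1 \<le> a"
      using free inside D rq by (auto simp: mem_excited_cells mem_diagram_three_rows)
    moreover obtain q' where q': "q = q' + 1" using 2 by (cases q) auto
    ultimately have "insert (i + 1, j + 1) (D - {(i, j)}) = excited_cells L a r q'"
      using excited_cells_slide_row2[of q' r a L] D 2 rq by (simp add: numeral_2_eq_2 numeral_3_eq_3)
    then show ?thesis using rq q' by (intro exI[of _ r] exI[of _ q']) simp
  next
    case 3
    then have "(i + 1, j) \<in> D"
      using inside D rq by (auto simp: mem_excited_cells mem_diagram_three_rows)
    then show ?thesis using free by simp
  next
    case 4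
    then show ?thesis using inside by (simp add: mem_diagram_three_rows)
  qed
qed

lemma excited_cells_excited:
  assumes mu: "diagram mu = diagram [L - 1, a - 1]" and a: "1 \<le> a" "a \<le> L"
  shows "r \<le> L - 1 \<Longrightarrow> q \<le> r \<Longrightarrow> q \<le> a - 1 \<Longrightarrow> excited [L, L, a] mu (excited_cells L a r q)"
proof (induction "L - 1 - r + (a - 1 - q)" arbitrary: r q rule: less_induct)
  case less
  consider "r = L - 1" "q = a - 1" | "q < r" "q < a - 1" | "r < L - 1" "\<not> (q < r \<and> q < a - 1)"
    using less.prems a by linarith
  then show ?case
  proof cases
    case 1
    then show ?thesis using excited.base[of "[L, L, a]" mu] mu excited_cells_initial[OF a] by simp
  next
    case 2
    then have "excited [L, L, a] mu (excited_cells L a r (q + 1))"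
      using less by simp
    from excited.move[OF this, of 2 "q + 1"]
    have "excited [L, L, a] mu (insert (3, q + 2) (excited_cells L a r (q + 1) - {(2, q + 1)}))"
      using 2 by (simp add: mem_excited_cells mem_diagram_three_rows numeral_3_eq_3)
    then show ?thesis using excited_cells_slide_row2[of q r a L] 2 by simp
  next
    case 3
    then have "excited [L, L, a] mu (excited_cells L a (r + 1) q)"
      using less by simp
    from excited.move[OF this, of 1 "r + 1"]
    have "excited [L, L, a] mu (insert (2, r + 2) (excited_cells L a (r + 1) q - {(1, r + 1)}))"
      using 3 less.prems by (simp add: mem_excited_cells mem_diagram_three_rows numeral_2_eq_2)
    then show ?thesis using excited_cells_slide_row1[of q r L a] 3 less.prems by simp
  qed
qed

lemma excited_iff_excited_cells:
  assumes "diagram mu = diagram [L - 1, a - 1]" "1 \<le> a" "a \<le> L"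
  shows "excited [L, L, a] mu D \<longleftrightarrow>
    (\<exists>r q. r \<le> L - 1 \<and> q \<le> r \<and> q \<le> a - 1 \<and> D = excited_cells L a r q)"
  using excited_imp_excited_cells[OF _ assms] excited_cells_excited[OF assms] by blast

section \<open>Hook lengths and the coefficient formula\<close>

definition row2_hook :: "nat \<Rightarrow> nat \<Rightarrow> nat \<Rightarrow> nat" where
  "row2_hook L a j = L - j + 1 + (if j \<le> a then 1 else 0)"

definition row3_hook :: "nat \<Rightarrow> nat \<Rightarrow> nat" where
  "row3_hook a j = a - j + 1"

lemma hook_row2:
  assumes "1 \<le> j" "j \<le> L"
  shows "hook [L, L, a] (2, j) = row2_hook L a j"
proof -
  have "{d \<in> diagram [L, L, a]. fst d = 2 \<and> j \<le> snd d} = Pair 2 ` {j..L}"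
    using assms by (auto simp: mem_diagram_three_rows)
  moreover have "{d \<in> diagram [L, L, a]. snd d = j \<and> 2 \<le> fst d} = (if j \<le> a then {(2, j), (3, j)} else {(2, j)})"
    using assms by (auto simp: mem_diagram_three_rows)
  ultimately show ?thesis
    using assms by (simp add: hook_def row2_hook_def card_image inj_on_def Suc_diff_le)
qed

lemma hook_row3:
  assumes "1 \<le> j" "j \<le> a"
  shows "hook [L, L, a] (3, j) = row3_hook a j"
proof -
  have "{d \<in> diagram [L, L, a]. fst d = 3 \<and> j \<le> snd d} = Pair 3 ` {j..a}"
    using assms by (auto simp: mem_diagram_three_rows)
  moreover have "{d \<in> diagram [L, L, a]. snd d = j \<and> 3 \<le> fst d} = {(3, j)}"
    using assms by (auto simp: mem_diagram_three_rows)
  ultimately show ?thesis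
    using assms by (simp add: hook_def row3_hook_def card_image inj_on_def Suc_diff_le)
qed

text \<open>The two factors of the hook weight of \<open>excited_cells L a r q\<close> outside row 1: the row-2
  cells right of column \<open>r + 1\<close>, and the cells of rows 2 and 3 around column \<open>q + 1\<close>.\<close>
definition right_weight :: "nat \<Rightarrow> nat \<Rightarrow> nat \<Rightarrow> nat" where
  "right_weight L a r = (\<Prod>j\<in>{r + 2..L}. row2_hook L a j)"

definition left_weight :: "nat \<Rightarrow> nat \<Rightarrow> nat \<Rightarrow> nat" where
  "left_weight L a q = (\<Prod>j\<in>{1..q}. row2_hook L a j) * (\<Prod>j\<in>{q + 2..a}. row3_hook a j)"

definition left_weight_sum :: "nat \<Rightarrow> nat \<Rightarrow> nat \<Rightarrow> nat" where
  "left_weight_sum L a r = (\<Sum>q\<in>{0..min r (a - 1)}. left_weight L a q)"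

text \<open>The Naruse-Newton coefficient of \<open>[L, L, a] / [L - 1, a - 1]\<close>, indexed by the number
  \<open>r\<close> of row-1 cells instead of \<open>j = s - r\<close>.\<close>
definition nn_coeff3 :: "nat \<Rightarrow> nat \<Rightarrow> nat \<Rightarrow> nat" where
  "nn_coeff3 L a r = right_weight L a r * left_weight_sum L a r"

lemma card_row1_excited_cells: "card {c \<in> excited_cells L a r q. fst c = 1} = r"
proof -
  have "{c \<in> excited_cells L a r q. fst c = 1} = Pair 1 ` {1..r}"
    by (auto simp: mem_excited_cells)
  then show ?thesis by (simp add: card_image inj_on_def)
qed

lemma prod_hook_excited_cells:
  assumes "1 \<le> a" "a \<le> L" "q \<le> r" "r \<le> L - 1"
  shows "(\<Prod>c\<in>{c \<in> excited_cells L a r q. fst c \<noteq> 1}. hook [L, L, a] c)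
    = right_weight L a r * left_weight L a q"
proof -
  let ?h = "hook [L, L, a]"
  have cells: "{c \<in> excited_cells L a r q. fst c \<noteq> 1}
      = Pair 2 ` {r + 2..L} \<union> Pair 2 ` {1..q} \<union> Pair 3 ` {q + 2..a}"
    by (auto simp: mem_excited_cells)
  have "(\<Prod>c\<in>Pair 2 ` {r + 2..L} \<union> Pair 2 ` {1..q} \<union> Pair 3 ` {q + 2..a}. ?h c)
      = (\<Prod>c\<in>Pair 2 ` {r + 2..L}. ?h c) * (\<Prod>c\<in>Pair 2 ` {1..q}. ?h c) * (\<Prod>c\<in>Pair 3 ` {q + 2..a}. ?h c)"
    using assms by (subst prod.union_disjoint; auto)+
  also have "\<dots> = right_weight L a r * left_weight L a q"
  proof -
    have "(\<Prod>c\<in>Pair 2 ` {r + 2..L}. ?h c) = right_weight L a r"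
      by (simp add: prod.reindex inj_on_def right_weight_def hook_row2)
    moreover have "(\<Prod>c\<in>Pair 2 ` {1..q}. ?h c) = (\<Prod>j\<in>{1..q}. row2_hook L a j)"
      using assms by (simp add: prod.reindex inj_on_def) (rule prod.cong, auto intro: hook_row2)
    moreover have "(\<Prod>c\<in>Pair 3 ` {q + 2..a}. ?h c) = (\<Prod>j\<in>{q + 2..a}. row3_hook a j)"
      by (simp add: prod.reindex inj_on_def hook_row3)
    ultimately show ?thesis by (simp add: left_weight_def mult.assoc)
  qed
  finally show ?thesis unfolding cells .
qed

lemma inj_on_excited_cells: "inj_on (excited_cells L a r) {..r}"
proof (rule inj_onI)
  have row2_start: "{j \<in> {1..r}. (2, j) \<in> excited_cells L a r q} = {1..q}" if "q \<le> r" for q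
    using that by (auto simp: mem_excited_cells)
  fix q q' assume "q \<in> {..r}" "q' \<in> {..r}" "excited_cells L a r q = excited_cells L a r q'"
  then show "q = q'" using row2_start[of q] row2_start[of q'] by (metis atMost_iff card_atLeastAtMost diff_Suc_1)
qed

lemma excited_row1_card_eq_image:
  assumes "diagram mu = diagram [L - 1, a - 1]" "1 \<le> a" "a \<le> L" "r \<le> L - 1"
  shows "{D. excited [L, L, a] mu D \<and> card {c \<in> D. fst c = 1} = r}
    = excited_cells L a r ` {0..min r (a - 1)}"
  using excited_iff_excited_cells[OF assms(1-3)] card_row1_excited_cells assms(4) by auto blast

lemma NN_coeff_doubleton:
  assumes ab: "1 \<le> a" "a < b" and j: "j \<le> b - 2"
  shows "NN_coeff {a, b} j = nn_coeff3 (b - 1) a (b - 2 - j)"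
proof -
  define L r where "L = b - 1" and "r = b - 2 - j"
  have a: "1 \<le> a" "a \<le> L" and r: "r \<le> L - 1" "sI {a, b} - j = r"
    using ab by (auto simp: L_def r_def sI_doubleton)
  have mu: "diagram (muI {a, b}) = diagram [L - 1, a - 1]"
    using diagram_muI_doubleton[OF ab] by (simp add: L_def numeral_2_eq_2)
  have inj: "inj_on (excited_cells L a r) {0..min r (a - 1)}"
    by (rule inj_on_subset[OF inj_on_excited_cells]) auto
  have "NN_coeff {a, b} j = (\<Sum>D\<in>excited_cells L a r ` {0..min r (a - 1)}.
      \<Prod>c\<in>{c \<in> D. fst c \<noteq> 1}. hook [L, L, a] c)"
    unfolding NN_coeff_def r(2) lamI_doubleton[OF ab] excited_row1_card_eq_image[OF mu a r(1), symmetric]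
    by (simp add: L_def)
  also have "\<dots> = (\<Sum>q\<in>{0..min r (a - 1)}. right_weight L a r * left_weight L a q)"
    unfolding sum.reindex[OF inj] comp_def
    by (intro sum.cong refl prod_hook_excited_cells) (use a r(1) in auto)
  also have "\<dots> = nn_coeff3 L a r"
    by (simp add: nn_coeff3_def left_weight_sum_def sum_distrib_left)
  finally show ?thesis by (simp add: L_def r_def)
qed

section \<open>Shape of the coefficient sequence\<close>

lemma right_weight_pos: "0 < right_weight L a r"
  by (simp add: right_weight_def row2_hook_def)

lemma left_weight_pos: "0 < left_weight L a q"
  by (simp add: left_weight_def row2_hook_def row3_hook_def)

lemma nn_coeff3_pos: "0 < nn_coeff3 L a r"
  by (simp add: nn_coeff3_def left_weight_sum_def right_weight_pos left_weight_pos sum_pos)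

lemma right_weight_step:
  "r + 2 \<le> L \<Longrightarrow> right_weight L a r = row2_hook L a (r + 2) * right_weight L a (r + 1)"
  unfolding right_weight_def by (subst prod.atLeast_Suc_atMost) auto

lemma nn_coeff3_decreasing:
  assumes "a - 1 \<le> r" "r + 2 \<le> L"
  shows "nn_coeff3 L a (r + 1) \<le> nn_coeff3 L a r"
proof -
  have "left_weight_sum L a (r + 1) = left_weight_sum L a r"
    using assms(1) by (simp add: left_weight_sum_def min_def)
  moreover have "right_weight L a (r + 1) \<le> right_weight L a r"
    using right_weight_step[OF assms(2), of a] by (simp add: row2_hook_def)
  ultimately show ?thesis by (simp add: nn_coeff3_def)
qed

lemma left_weight_ratio:
  assumes "q + 2 \<le> a" "a \<le> L"
  shows "left_weight L a (q + 1) * (a - q - 1) = left_weight L a q * (L - q + 1)"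
proof -
  define P Q where "P = (\<Prod>j\<in>{1..q}. row2_hook L a j)" and "Q = (\<Prod>j\<in>{q + 3..a}. row3_hook a j)"
  have "row2_hook L a (q + 1) = L - q + 1"
    using assms by (simp add: row2_hook_def)
  then have "left_weight L a (q + 1) = P * (L - q + 1) * Q"
    by (simp add: left_weight_def P_def Q_def numeral_3_eq_3)
  moreover have "row3_hook a (q + 2) = a - q - 1"
    using assms by (simp add: row3_hook_def)
  then have "(\<Prod>j\<in>{q + 2..a}. row3_hook a j) = (a - q - 1) * Q"
    using assms prod.atLeast_Suc_atMost[of "q + 2" a "row3_hook a"]
    by (simp add: Q_def numeral_3_eq_3)
  then have "left_weight L a q = P * ((a - q - 1) * Q)"
    by (simp add: left_weight_def P_def)
  ultimately show ?thesis by (simp only: mult.assoc mult.commute mult.left_commute)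
qed

text \<open>At \<open>r = a - 2\<close> this bound beats the factor \<open>L - a + 2\<close> lost from \<open>right_weight\<close>, so
  the coefficients rise strictly into index \<open>a - 1\<close>.\<close>
lemma left_weight_sum_bound:
  assumes a: "1 \<le> a" "a \<le> L" and "r \<le> a - 1"
  shows "(L - a + 1) * (\<Sum>q\<in>{0..r}. left_weight L a q) < (L - r + 1) * left_weight L a r"
  using \<open>r \<le> a - 1\<close>
proof (induction r)
  case 0
  then show ?case using left_weight_pos[of L a 0] a by simp
next
  case (Suc r)
  have "(L - a + 1) * (\<Sum>q\<in>{0..Suc r}. left_weight L a q)
      = (L - a + 1) * (\<Sum>q\<in>{0..r}. left_weight L a q) + (L - a + 1) * left_weight L a (r + 1)"
    by (simp add: algebra_simps)
  also have "\<dots> < (L - r + 1) * left_weight L a r + (L - a + 1) * left_weight L a (r + 1)"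
    using Suc by simp
  also have "(L - r + 1) * left_weight L a r = (a - r - 1) * left_weight L a (r + 1)"
    using left_weight_ratio[of r a L] Suc.prems a by (simp add: mult.commute)
  also have "(a - r - 1) * left_weight L a (r + 1) + (L - a + 1) * left_weight L a (r + 1)
      = ((a - r - 1) + (L - a + 1)) * left_weight L a (r + 1)"
    by (simp only: add_mult_distrib)
  also have "(a - r - 1) + (L - a + 1) = L - Suc r + 1"
    using Suc.prems a by simp
  finally show ?case by simp
qed

lemma nn_coeff3_ascent:
  assumes a: "2 \<le> a" "a \<le> L"
  shows "nn_coeff3 L a (a - 2) < nn_coeff3 L a (a - 1)"
proof -
  define r S where "r = a - 2" and "S = (\<Sum>q\<in>{0..r}. left_weight L a q)"
  have r: "a - 1 = r + 1" "r + 2 = a" using a by (simp_all add: r_def)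
  have "min r (a - 1) = r" "min (r + 1) (a - 1) = r + 1"
    using r by simp_all
  then have sums: "left_weight_sum L a r = S" "left_weight_sum L a (r + 1) = S + left_weight L a (r + 1)"
    by (simp_all add: left_weight_sum_def S_def)
  have "(L - a + 1) * S < (L - r + 1) * left_weight L a r"
    using left_weight_sum_bound[of a L r] a by (simp add: S_def r_def)
  also have "\<dots> = left_weight L a (r + 1)"
    using left_weight_ratio[of r a L] a by (simp add: r_def mult.commute)
  finally have less: "(L - a + 2) * S < S + left_weight L a (r + 1)"
    by simp
  have "right_weight L a r = row2_hook L a (r + 2) * right_weight L a (r + 1)"
    by (rule right_weight_step) (use a r in simp)
  also have "row2_hook L a (r + 2) = L - a + 2"
    unfolding r(2) row2_hook_def using a by simp
  finally have "nn_coeff3 L a (a - 2) = right_weight L a (r + 1) * ((L - a + 2) * S)"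
    unfolding nn_coeff3_def r_def[symmetric] sums(1) by (simp only: mult_ac)
  also have "\<dots> < right_weight L a (r + 1) * (S + left_weight L a (r + 1))"
    using less right_weight_pos[of L a "r + 1"] by simp
  also have "\<dots> = nn_coeff3 L a (a - 1)"
    unfolding nn_coeff3_def r(1) sums(2) ..
  finally show ?thesis .
qed

lemma nn_coeff3_start:
  assumes a: "2 \<le> a" "a \<le> L"
  shows "nn_coeff3 L a 0 * (a + L) = nn_coeff3 L a 1 * (L * (a - 1))"
proof -
  have ratio: "left_weight L a 1 * (a - 1) = left_weight L a 0 * (L + 1)"
    using left_weight_ratio[of 0 a L] a by simp
  have "row2_hook L a 2 = L"
    using a by (simp add: row2_hook_def)
  then have "right_weight L a 0 = L * right_weight L a 1"
    using right_weight_step[of 0 L a] a by (simp add: numeral_2_eq_2)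
  moreover have "left_weight_sum L a 0 = left_weight L a 0"
    "left_weight_sum L a 1 = left_weight L a 0 + left_weight L a 1"
    using a by (simp_all add: left_weight_sum_def)
  moreover have "(left_weight L a 0 + left_weight L a 1) * (a - 1) = left_weight L a 0 * (a - 1 + (L + 1))"
    unfolding add_mult_distrib add_mult_distrib2 ratio ..
  moreover have "a - 1 + (L + 1) = a + L"
    using a by simp
  ultimately show ?thesis
    by (simp add: nn_coeff3_def)
qed

lemma unimodal_nn_coeff3:
  assumes a: "1 \<le> a" "a \<le> L" and small: "a \<le> 2 \<or> a = 3 \<and> L = 3"
  shows "unimodal (nn_coeff3 L a) (L - 1)"
proof (cases "a = 3 \<and> L = 3")
  case True
  then have "nn_coeff3 L a 0 = nn_coeff3 L a 1"
    using nn_coeff3_start[of a L] by simp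
  moreover have "nn_coeff3 L a 1 < nn_coeff3 L a 2"
    using nn_coeff3_ascent[of a L] True by simp
  ultimately show ?thesis
    using True by (intro unimodal_intro[of "L - 1"]) (auto simp: less_Suc_eq numeral_2_eq_2)
next
  case False
  with small have "a \<le> 2" by simp
  show ?thesis
  proof (rule unimodal_intro[of "a - 1"])
    fix k assume "k < a - 1"
    then have "a = 2" "k = 0" using \<open>a \<le> 2\<close> by auto
    then show "nn_coeff3 L a k \<le> nn_coeff3 L a (Suc k)"
      using nn_coeff3_ascent[of a L] a by simp
  next
    fix k assume "a - 1 \<le> k" "k < L - 1"
    then show "nn_coeff3 L a (Suc k) \<le> nn_coeff3 L a k"
      using nn_coeff3_decreasing[of a k L] by simp
  qed (use a in simp)
qed

lemma not_unimodal_nn_coeff3: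
  assumes a: "3 \<le> a" "a \<le> L" and large: "\<not> (a = 3 \<and> L = 3)"
  shows "\<not> unimodal (nn_coeff3 L a) (L - 1)"
proof (rule not_unimodal_descent_ascent[of _ 0 "a - 2"])
  have "a + L < L * (a - 1)"
  proof (cases "a = 3")
    case True
    then show ?thesis using a large by simp
  next
    case False
    then have "a + L < L * 3" using a by simp
    also have "\<dots> \<le> L * (a - 1)" using False a by simp
    finally show ?thesis .
  qed
  then have "nn_coeff3 L a 0 * (a + L) < nn_coeff3 L a 0 * (L * (a - 1))"
    using nn_coeff3_pos[of L a 0] a by simp
  then have "nn_coeff3 L a 1 * (L * (a - 1)) < nn_coeff3 L a 0 * (L * (a - 1))"
    using nn_coeff3_start[of a L] a by simp
  then show "nn_coeff3 L a (Suc 0) < nn_coeff3 L a 0"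
    by simp
  show "nn_coeff3 L a (a - 2) < nn_coeff3 L a (Suc (a - 2))"
    using nn_coeff3_ascent[of a L] a by (simp add: Suc_diff_Suc numeral_2_eq_2)
qed (use a in auto)

lemma unimodal_nn_coeff3_iff:
  "1 \<le> a \<Longrightarrow> a \<le> L \<Longrightarrow> unimodal (nn_coeff3 L a) (L - 1) \<longleftrightarrow> a \<le> 2 \<or> a = 3 \<and> L = 3"
  using unimodal_nn_coeff3[of a L] not_unimodal_nn_coeff3[of a L] by linarith

lemma unimodal_NN_coeff_doubleton_iff:
  assumes ab: "1 \<le> a" "a < b"
  shows "unimodal (NN_coeff {a, b}) (sI {a, b}) \<longleftrightarrow> a \<le> 2 \<or> a = 3 \<and> b = 4"
proof -
  have "unimodal (NN_coeff {a, b}) (b - 2) \<longleftrightarrow> unimodal (\<lambda>j. nn_coeff3 (b - 1) a (b - 2 - j)) (b - 2)"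
    by (rule unimodal_cong) (rule NN_coeff_doubleton[OF ab])
  also have "\<dots> \<longleftrightarrow> unimodal (nn_coeff3 (b - 1) a) (b - 2)"
    by (rule unimodal_reflect_iff)
  also have "\<dots> \<longleftrightarrow> a \<le> 2 \<or> a = 3 \<and> b = 4"
    using unimodal_nn_coeff3_iff[of a "b - 1"] ab by (auto simp: numeral_2_eq_2)
  finally show ?thesis using sI_doubleton[OF ab] by simp
qed

lemma card_two_subsets:
  fixes A :: "'a::linorder set"
  shows "card {I. I \<subseteq> A \<and> card I = 2 \<and> P I} = card {(a, b). a \<in> A \<and> b \<in> A \<and> a < b \<and> P {a, b}}"
proof -
  let ?pairs = "{(a, b). a \<in> A \<and> b \<in> A \<and> a < b \<and> P {a, b}}"
  have "{I. I \<subseteq> A \<and> card I = 2 \<and> P I} = (\<lambda>(a, b). {a, b}) ` ?pairs"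
  proof (intro set_eqI iffI)
    fix I assume "I \<in> {I. I \<subseteq> A \<and> card I = 2 \<and> P I}"
    then obtain x y where I: "I = {x, y}" "x \<noteq> y" and "I \<subseteq> A" "P I"
      by (auto simp: card_2_iff)
    obtain u v where "I = {u, v}" "u < v"
      using I by (cases "x < y") (auto simp: insert_commute dest: neqE)
    then show "I \<in> (\<lambda>(a, b). {a, b}) ` ?pairs"
      using \<open>I \<subseteq> A\<close> \<open>P I\<close> by (intro image_eqI[of _ _ "(u, v)"]) auto
  qed auto
  moreover have "inj_on (\<lambda>(a, b). {a, b}) ?pairs"
    by (auto simp: inj_on_def doubleton_eq_iff)
  ultimately show ?thesis by (simp add: card_image)
qed

lemma card_unimodal_pairs:
  assumes "4 \<le> n"
  shows "card {(a, b). a \<in> {1..n} \<and> b \<in> {1..n} \<and> a < b \<and> unimodal (NN_coeff {a, b}) (sI {a, b})}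
    = 2 * n - 2"
proof -
  have "{(a, b). a \<in> {1..n} \<and> b \<in> {1..n} \<and> a < b \<and> unimodal (NN_coeff {a, b}) (sI {a, b})}
      = {1} \<times> {2..n} \<union> {2} \<times> {3..n} \<union> {(3, 4)}" (is "_ = ?pairs")
    using assms by (auto simp: unimodal_NN_coeff_doubleton_iff)
  moreover have "card ?pairs = (n - 1) + (n - 2) + 1"
    by (subst card_Un_disjoint; (subst card_Un_disjoint)?) (auto simp: card_cartesian_product)
  ultimately show ?thesis using assms by simp
qed

lemma real_choose_two: "real (n choose 2) = real n * (real n - 1) / 2"
proof (induction n)
  case (Suc n)
  have "Suc n choose 2 = n + (n choose 2)"
    by (simp add: numeral_2_eq_2)
  then show ?case using Suc by (simp add: field_simps)
qed simp

theorem corollary6p3: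
  fixes n :: nat
  assumes "n \<ge> 4"
  shows "real (card {I. I \<subseteq> {1..n} \<and> card I = 2 \<and> unimodal (NN_coeff I) (sI I)})
           / real (card {I. I \<subseteq> {1..n} \<and> card I = 2}) = 4 / real n"
proof -
  have "card {I. I \<subseteq> {1..n} \<and> card I = 2 \<and> unimodal (NN_coeff I) (sI I)} = 2 * n - 2"
    using card_two_subsets[of "{1..n}"] card_unimodal_pairs[OF assms] by simp
  moreover have "card {I. I \<subseteq> {1..n} \<and> card I = 2} = n choose 2"
    using n_subsets[of "{1..n}" 2] by simp
  ultimately show ?thesis
    using assms by (simp add: real_choose_two of_nat_diff field_simps)
qed

end
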